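(* Let $\mathcal{F}$ be the family of subsets $C\subset\mathbb{Z}^n$ that are bounded below, i.e. for which there exist $b_1,\dots,b_n\in\mathbb{Z}$ with $\alpha_i\ge b_i$ for all $\alpha\in C$ and all $i$. For $C\in\mathcal{F}$ define $m_C:\mathbb{Z}^n\to\mathbb{Z}$ by $m_C(\alpha)=\#\{i\in\{1,\dots,n\}\mid \alpha+e_i\in C\}$, i.e. $m_C=\sum_{i=1}^n\mathbb{1}_{C-e_i}$. Then the map $\mathcal{F}\to\{f:\mathbb{Z}^n\to\mathbb{Z}\}$, $C\mapsto m_C$, is injective.
   Context: $e_1,\dots,e_n$ denotes the standard basis of $\mathbb{Z}^n$ and $\mathbb{1}_X$ the indicator function of a set $X$. *)

theory Defs
  imports "HOL-Analysis.Analysis"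
begin

definition std_basis :: "'n::finite \<Rightarrow> int ^ 'n" where
  "std_basis i = (\<chi> j. if j = i then 1 else 0)"

definition bounded_below :: "(int ^ 'n::finite) set \<Rightarrow> bool" where
  "bounded_below C \<longleftrightarrow> (\<exists>b :: int ^ 'n. \<forall>\<alpha>\<in>C. \<forall>i. \<alpha> $ i \<ge> b $ i)"

definition mC :: "(int ^ 'n::finite) set \<Rightarrow> int ^ 'n \<Rightarrow> int" where
  "mC C \<alpha> = int (card {i. \<alpha> + std_basis i \<in> C})"

end

theory Submission
  imports Defs
begin

text \<open>If \<open>C \<noteq> D\<close>, their symmetric difference \<open>S\<close> is nonempty and bounded below. Fix a direction
  \<open>k\<close> and let \<open>\<gamma> \<in> S\<close> minimise first the total degree and then the \<open>k\<close>-th coordinate. For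
  \<open>\<alpha> = \<gamma> - e\<^sub>k\<close>, every \<open>\<alpha> + e\<^sub>i\<close> has the same degree as \<open>\<gamma>\<close>, and for \<open>i \<noteq> k\<close> a smaller \<open>k\<close>-th
  coordinate, so it lies outside \<open>S\<close>. Hence the neighbour sets of \<open>\<alpha>\<close> in \<open>C\<close> and in \<open>D\<close> differ
  exactly in \<open>k\<close>, and \<open>m\<^sub>C(\<alpha>) \<noteq> m\<^sub>D(\<alpha>)\<close>.\<close>

lemma std_basis_nth [simp]: "std_basis i $ j = (if j = i then 1 else 0)"
  by (simp add: std_basis_def)

lemma sum_nth_add_std_basis: "(\<Sum>j\<in>UNIV. (\<alpha> + std_basis i) $ j) = (\<Sum>j\<in>UNIV. \<alpha> $ j) + 1"
  by (simp add: sum.distrib)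

lemma bounded_below_subset: "bounded_below D \<Longrightarrow> C \<subseteq> D \<Longrightarrow> bounded_below C"
  unfolding bounded_below_def by blast

lemma bounded_below_Un:
  fixes C D :: "(int ^ 'n::finite) set"
  assumes "bounded_below C" "bounded_below D"
  shows "bounded_below (C \<union> D)"
proof -
  obtain b c :: "int ^ 'n" where b: "\<forall>\<alpha>\<in>C. \<forall>i. \<alpha> $ i \<ge> b $ i"
    and c: "\<forall>\<alpha>\<in>D. \<forall>i. \<alpha> $ i \<ge> c $ i"
    using assms unfolding bounded_below_def by blast
  have "\<alpha> $ i \<ge> (\<chi> j. min (b $ j) (c $ j)) $ i" if "\<alpha> \<in> C \<union> D" for \<alpha> i
    using that b c by (auto simp: min.coboundedI1 min.coboundedI2)
  then show ?thesis
    unfolding bounded_below_def by blast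
qed

lemma bounded_below_ex_neighbours_singleton:
  fixes S :: "(int ^ 'n::finite) set"
  assumes "bounded_below S" "S \<noteq> {}"
  shows "\<exists>\<alpha>. {i. \<alpha> + std_basis i \<in> S} = {k}"
proof -
  obtain b :: "int ^ 'n" where b: "\<And>\<alpha> j. \<alpha> \<in> S \<Longrightarrow> b $ j \<le> \<alpha> $ j"
    using assms(1) unfolding bounded_below_def by blast
  define rank where "rank \<gamma> = (nat (\<Sum>j\<in>UNIV. \<gamma> $ j - b $ j), nat (\<gamma> $ k - b $ k))"
    for \<gamma> :: "int ^ 'n"
  have "wf (inv_image (less_than <*lex*> less_than) rank)"
    by (intro wf_inv_image wf_lex_prod wf_less_than)
  then obtain \<gamma> where "\<gamma> \<in> S"
    and \<gamma>_min: "\<And>\<delta>. (\<delta>, \<gamma>) \<in> inv_image (less_than <*lex*> less_than) rank \<Longrightarrow> \<delta> \<notin> S"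
    using assms(2) by (metis ex_in_conv wfE_min)
  define \<alpha> where "\<alpha> = \<gamma> - std_basis k"
  have "\<alpha> + std_basis i \<notin> S" if "i \<noteq> k" for i
  proof
    assume \<delta>: "\<alpha> + std_basis i \<in> S"
    have "(\<Sum>j\<in>UNIV. (\<alpha> + std_basis i) $ j) = (\<Sum>j\<in>UNIV. \<gamma> $ j)"
      using sum_nth_add_std_basis[of \<alpha> i] sum_nth_add_std_basis[of \<alpha> k] by (simp add: \<alpha>_def)
    moreover have "(\<alpha> + std_basis i) $ k = \<gamma> $ k - 1"
      using that by (simp add: \<alpha>_def)
    moreover have "b $ k \<le> (\<alpha> + std_basis i) $ k"
      using b[OF \<delta>] .
    ultimately have "(\<alpha> + std_basis i, \<gamma>) \<in> inv_image (less_than <*lex*> less_than) rank"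
      by (simp add: rank_def sum_subtractf)
    then show False
      using \<gamma>_min \<delta> by blast
  qed
  moreover have "\<alpha> + std_basis k \<in> S"
    using \<open>\<gamma> \<in> S\<close> by (simp add: \<alpha>_def)
  ultimately have "{i. \<alpha> + std_basis i \<in> S} = {k}"
    by auto
  then show ?thesis ..
qed

lemma card_ne_if_sym_diff_singleton:
  assumes "finite A" "finite B" "sym_diff A B = {k}"
  shows "card A \<noteq> card B"
proof -
  have "A - B = {k} \<and> B - A = {} \<or> A - B = {} \<and> B - A = {k}"
    using assms(3) unfolding Un_singleton_iff by blast
  moreover have "card A = card (A \<inter> B) + card (A - B)" "card B = card (A \<inter> B) + card (B - A)"
    using assms(1,2) card_Int_Diff[of A B] card_Int_Diff[of B A] by (simp_all add: Int_commute)
  ultimately show ?thesis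
    by (elim disjE conjE) simp_all
qed

theorem proposition3p2:
  "inj_on (mC :: (int ^ 'n::finite) set \<Rightarrow> int ^ 'n \<Rightarrow> int) {C. bounded_below C}"
proof (rule inj_onI, rule ccontr)
  fix C D :: "(int ^ 'n) set" and k :: 'n
  assume "C \<in> {C. bounded_below C}" "D \<in> {C. bounded_below C}" "mC C = mC D" "C \<noteq> D"
  define S where "S = sym_diff C D"
  have "bounded_below S" "S \<noteq> {}"
    using \<open>C \<in> _\<close> \<open>D \<in> _\<close> \<open>C \<noteq> D\<close> bounded_below_Un[of C D]
    by (auto simp: S_def intro: bounded_below_subset)
  then obtain \<alpha> where "{i. \<alpha> + std_basis i \<in> S} = {k}"
    using bounded_below_ex_neighbours_singleton by blast
  then have "sym_diff {i. \<alpha> + std_basis i \<in> C} {i. \<alpha> + std_basis i \<in> D} = {k}"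
    unfolding S_def by blast
  then have "mC C \<alpha> \<noteq> mC D \<alpha>"
    unfolding mC_def by (simp add: card_ne_if_sym_diff_singleton)
  then show False
    using \<open>mC C = mC D\<close> by simp
qed

end
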